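(* Let $(X,d_X)$ be a metric space and $(Y,d_Y)$ a metric space with the coarse Stone property, i.e. $\Delta_Y^{(c)}(R)<\infty$ for all $R\in[0,\infty)$. If there exists a coarse embedding $f\colon X\to Y$, then $X$ has the coarse Stone property, i.e. $\Delta_X^{(c)}(R)<\infty$ for all $R\in[0,\infty)$. If $f$ is a coarse Lipschitz embedding and there are $C,D\in[0,\infty)$ such that $\Delta_Y^{(c)}(R)\leq CR+D$ for all $R\in[0,\infty)$, then there are $C',D'\in[0,\infty)$ such that $\Delta_X^{(c)}(R)<C'R+D'$ for all $R\in[0,\infty)$. If, in particular, $f$ is a bi-Lipschitz embedding and $D=0$, then $\Delta_X^{(c)}(R)\leq C\,\mathrm{dist}(f)\,R$ for all $R\in[0,\infty)$.
   Context: For a metric space $X$ and a cover $\mathcal{U}$ of $X$: $\mathrm{diam}(\mathcal{U})=\sup_{U\in\mathcal{U}}\mathrm{diam}(U)$; $\mathcal{L}(\mathcal{U})=\sup\{d\in[0,\infty): \text{every } E\subseteq X \text{ with } \mathrm{diam}(E)<d \text{ is contained in some } U\in\mathcal{U}\}$; $\mathcal{U}$ is point-finite if each point lies in only finitely many members. $\Delta_X^{(c)}(R)=\inf\{\mathrm{diam}(\mathcal{U}): \mathcal{U} \text{ a point-finite cover of } X,\ \mathcal{L}(\mathcal{U})\geq R\}$. For $f\colon X\to Y$: $\omega_f(t)=\sup\{d_Y(f(x_1),f(x_2)): d_X(x_1,x_2)\leq t\}$, $\rho_f(t)=\inf\{d_Y(f(x_1),f(x_2)): d_X(x_1,x_2)\geq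 t\}$; $f$ is a coarse embedding if $\omega_f(t)<\infty$ for all $t$ and $\lim_{t\to\infty}\rho_f(t)=\infty$; a coarse Lipschitz embedding if there are $A\geq1$, $B\geq0$ with $\omega_f(t)\leq At+B$ and $\rho_f(t)\geq t/A-B$ for all $t$; a bi-Lipschitz embedding if this holds with $B=0$. $\mathrm{Lip}(f)=\sup_{x_1\neq x_2} d_Y(f(x_1),f(x_2))/d_X(x_1,x_2)$ and for injective $f$, $\mathrm{dist}(f)=\mathrm{Lip}(f)\mathrm{Lip}(f^{-1})$. *)

theory Defs
  imports "HOL-Analysis.Analysis"
begin

text \<open>Diameter of a set, valued in [0,\<infinity>] (empty set has diameter 0).\<close>
definition ediam :: "'a::metric_space set \<Rightarrow> ennreal" where
  "ediam U = (SUP x\<in>U. SUP y\<in>U. ennreal (dist x y))"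

definition cover_diam :: "'a::metric_space set set \<Rightarrow> ennreal" where
  "cover_diam \<U> = (SUP U\<in>\<U>. ediam U)"

definition lebesgue_num :: "'a::metric_space set \<Rightarrow> 'a set set \<Rightarrow> ennreal" where
  "lebesgue_num X \<U> = Sup {ennreal d | d. d \<ge> 0 \<and>
      (\<forall>E. E \<subseteq> X \<longrightarrow> ediam E < ennreal d \<longrightarrow> (\<exists>U\<in>\<U>. E \<subseteq> U))}"

definition is_cover :: "'a set \<Rightarrow> 'a set set \<Rightarrow> bool" where
  "is_cover X \<U> \<longleftrightarrow> (\<forall>U\<in>\<U>. U \<subseteq> X) \<and> \<Union>\<U> = X"

definition point_finite :: "'a set set \<Rightarrow> bool" where
  "point_finite \<U> \<longleftrightarrow> (\<forall>x. finite {U\<in>\<U>. x \<in> U})"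

definition Delta_c :: "'a::metric_space set \<Rightarrow> real \<Rightarrow> ennreal" where
  "Delta_c X R = (INF \<U>\<in>{\<U>. is_cover X \<U> \<and> point_finite \<U> \<and> lebesgue_num X \<U> \<ge> ennreal R}.
                    cover_diam \<U>)"

definition coarse_stone :: "'a::metric_space set \<Rightarrow> bool" where
  "coarse_stone X \<longleftrightarrow> (\<forall>R\<ge>0. Delta_c X R < \<infinity>)"

definition omega_f :: "('a::metric_space \<Rightarrow> 'b::metric_space) \<Rightarrow> real \<Rightarrow> ennreal" where
  "omega_f f t = (SUP p\<in>{(x1,x2). dist x1 x2 \<le> t}. ennreal (dist (f (fst p)) (f (snd p))))"

definition rho_f :: "('a::metric_space \<Rightarrow> 'b::metric_space) \<Rightarrow> real \<Rightarrow> ennreal" where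
  "rho_f f t = (INF p\<in>{(x1,x2). dist x1 x2 \<ge> t}. ennreal (dist (f (fst p)) (f (snd p))))"

definition coarse_embedding :: "('a::metric_space \<Rightarrow> 'b::metric_space) \<Rightarrow> bool" where
  "coarse_embedding f \<longleftrightarrow> (\<forall>t. omega_f f t < \<infinity>) \<and> (rho_f f \<longlongrightarrow> \<infinity>) at_top"

definition coarse_lipschitz_embedding :: "('a::metric_space \<Rightarrow> 'b::metric_space) \<Rightarrow> bool" where
  "coarse_lipschitz_embedding f \<longleftrightarrow> (\<exists>A B. A \<ge> 1 \<and> B \<ge> 0 \<and>
     (\<forall>t\<ge>0. omega_f f t \<le> ennreal (A * t + B) \<and> rho_f f t \<ge> ennreal (t / A - B)))"

definition bi_lipschitz_embedding :: "('a::metric_space \<Rightarrow> 'b::metric_space) \<Rightarrow> bool" where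
  "bi_lipschitz_embedding f \<longleftrightarrow> (\<exists>A. A \<ge> 1 \<and>
     (\<forall>t\<ge>0. omega_f f t \<le> ennreal (A * t) \<and> rho_f f t \<ge> ennreal (t / A)))"

definition Lip :: "('a::metric_space \<Rightarrow> 'b::metric_space) \<Rightarrow> ennreal" where
  "Lip f = (SUP p\<in>{(x1,x2). x1 \<noteq> x2}. ennreal (dist (f (fst p)) (f (snd p)) / dist (fst p) (snd p)))"

definition Lip_inv :: "('a::metric_space \<Rightarrow> 'b::metric_space) \<Rightarrow> ennreal" where
  "Lip_inv f = (SUP p\<in>{(x1,x2). x1 \<noteq> x2}. ennreal (dist (fst p) (snd p) / dist (f (fst p)) (f (snd p))))"

definition distortion :: "('a::metric_space \<Rightarrow> 'b::metric_space) \<Rightarrow> ennreal" where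
  "distortion f = Lip f * Lip_inv f"

end

theory Submission
  imports Defs
begin

text \<open>Covers of \<open>Y\<close> pull back along \<open>f\<close>: the preimages of a point-finite cover of \<open>Y\<close>
  form a point-finite cover of \<open>X\<close>. If \<open>f\<close> maps \<open>R\<close>-small sets to sets of diameter at most
  \<open>w < R'\<close>, a Lebesgue number \<open>R'\<close> upstairs yields a Lebesgue number \<open>R\<close> downstairs; if points
  with \<open>S\<close>-close images are \<open>T\<close>-close, diameter below \<open>S\<close> upstairs yields diameter at most \<open>T\<close>
  downstairs. For a coarse embedding such \<open>w\<close> and \<open>T\<close> exist for all \<open>R\<close> and \<open>S\<close>, for a coarse
  Lipschitz embedding they grow affinely, and for a bi-Lipschitz embedding they are \<open>Lip f * R\<close>
  and \<open>Lip_inv f * S\<close>, which transfers the respective bounds on \<open>\<Delta>\<^sub>Y\<close> to \<open>\<Delta>\<^sub>X\<close>.\<close>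

lemma ediam_le_ennreal_iff:
  assumes "0 \<le> r"
  shows "ediam E \<le> ennreal r \<longleftrightarrow> (\<forall>x\<in>E. \<forall>y\<in>E. dist x y \<le> r)"
  using assms by (simp add: ediam_def SUP_le_iff ennreal_le_iff)

lemma dist_less_of_ediam_less:
  assumes "ediam E < ennreal r" "x \<in> E" "y \<in> E"
  shows "dist x y < r"
proof -
  have "ennreal (dist x y) \<le> ediam E"
    unfolding ediam_def using assms(2,3) by (blast intro: SUP_upper2)
  also have "\<dots> < ennreal r"
    by (fact assms(1))
  finally show ?thesis
    by (simp add: ennreal_less_iff)
qed

lemma lebesgue_num_geI:
  assumes "0 \<le> R" "\<And>E. E \<subseteq> X \<Longrightarrow> ediam E < ennreal R \<Longrightarrow> \<exists>U\<in>\<U>. E \<subseteq> U"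
  shows "ennreal R \<le> lebesgue_num X \<U>"
  unfolding lebesgue_num_def using assms by (blast intro: Sup_upper)

lemma lebesgue_num_geD:
  assumes "ennreal R \<le> lebesgue_num X \<U>" "E \<subseteq> X" "ediam E < ennreal R"
  shows "\<exists>U\<in>\<U>. E \<subseteq> U"
proof -
  have "ediam E < lebesgue_num X \<U>" using assms(1,3) by order
  then obtain d where "0 \<le> d" "ediam E < ennreal d"
    "\<forall>E. E \<subseteq> X \<longrightarrow> ediam E < ennreal d \<longrightarrow> (\<exists>U\<in>\<U>. E \<subseteq> U)"
    unfolding lebesgue_num_def by (auto simp: less_Sup_iff)
  with assms(2) show ?thesis by blast
qed

lemma Delta_c_le_cover_diam:
  "is_cover X \<U> \<Longrightarrow> point_finite \<U> \<Longrightarrow> ennreal R \<le> lebesgue_num X \<U> \<Longrightarrow> Delta_c X R \<le> cover_diam \<U>"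
  by (auto simp: Delta_c_def intro!: INF_lower)

lemma Delta_c_lessE:
  assumes "Delta_c X R < a"
  obtains \<U> where "is_cover X \<U>" "point_finite \<U>" "ennreal R \<le> lebesgue_num X \<U>" "cover_diam \<U> < a"
  using assms by (auto simp: Delta_c_def INF_less_iff)

definition vimage_cover :: "('a \<Rightarrow> 'b) \<Rightarrow> 'b set set \<Rightarrow> 'a set set" where
  "vimage_cover f \<V> = (\<lambda>V. f -` V) ` \<V>"

lemma is_cover_vimage_cover: "is_cover UNIV \<V> \<Longrightarrow> is_cover UNIV (vimage_cover f \<V>)"
  by (auto simp: is_cover_def vimage_cover_def) (metis UNIV_I Union_iff)

lemma point_finite_vimage_cover:
  assumes "point_finite \<V>"
  shows "point_finite (vimage_cover f \<V>)"
  unfolding point_finite_def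
proof
  fix x
  have "{U \<in> vimage_cover f \<V>. x \<in> U} = (\<lambda>V. f -` V) ` {V \<in> \<V>. f x \<in> V}"
    by (auto simp: vimage_cover_def)
  with assms show "finite {U \<in> vimage_cover f \<V>. x \<in> U}"
    by (simp add: point_finite_def)
qed

lemma lebesgue_num_vimage_cover_ge:
  fixes f :: "'a::metric_space \<Rightarrow> 'b::metric_space"
  assumes "ennreal R' \<le> lebesgue_num UNIV \<V>" "0 \<le> R" "0 \<le> w" "w < R'"
    and "\<And>x y. dist x y < R \<Longrightarrow> dist (f x) (f y) \<le> w"
  shows "ennreal R \<le> lebesgue_num UNIV (vimage_cover f \<V>)"
proof (rule lebesgue_num_geI[OF \<open>0 \<le> R\<close>])
  fix E :: "'a set"
  assume "ediam E < ennreal R"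
  then have "ediam (f ` E) \<le> ennreal w"
    using assms(3,5) by (auto simp: ediam_le_ennreal_iff dest: dist_less_of_ediam_less)
  also have "\<dots> < ennreal R'"
    using assms(3,4) by (simp add: ennreal_lessI)
  finally obtain V where "V \<in> \<V>" "f ` E \<subseteq> V"
    using lebesgue_num_geD[OF assms(1)] by blast
  then show "\<exists>U\<in>vimage_cover f \<V>. E \<subseteq> U"
    by (auto simp: vimage_cover_def)
qed

lemma cover_diam_vimage_cover_le:
  assumes "cover_diam \<V> \<le> ennreal S" "0 \<le> S" "0 \<le> T"
    and "\<And>x y. dist (f x) (f y) \<le> S \<Longrightarrow> dist x y \<le> T"
  shows "cover_diam (vimage_cover f \<V>) \<le> ennreal T"
  unfolding cover_diam_def
proof (rule SUP_least)
  fix U assume "U \<in> vimage_cover f \<V>"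
  then obtain V where "V \<in> \<V>" "U = f -` V"
    by (auto simp: vimage_cover_def)
  moreover have "ediam V \<le> ennreal S" if "V \<in> \<V>" for V
    using assms(1) that unfolding cover_diam_def by (meson SUP_le_iff)
  ultimately show "ediam U \<le> ennreal T"
    using assms by (auto simp: ediam_le_ennreal_iff)
qed

lemma Delta_c_UNIV_le_by_pullback:
  fixes f :: "'a::metric_space \<Rightarrow> 'b::metric_space"
  assumes "0 \<le> R" "0 \<le> w" "w < R'"
    and expansion: "\<And>x y. dist x y < R \<Longrightarrow> dist (f x) (f y) \<le> w"
    and "Delta_c (UNIV :: 'b set) R' < ennreal S"
    and compression: "\<And>x y. dist (f x) (f y) \<le> S \<Longrightarrow> dist x y \<le> T"
  shows "Delta_c (UNIV :: 'a set) R \<le> ennreal T"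
proof -
  obtain \<V> :: "'b set set" where \<V>: "is_cover UNIV \<V>" "point_finite \<V>"
    "ennreal R' \<le> lebesgue_num UNIV \<V>" "cover_diam \<V> < ennreal S"
    using Delta_c_lessE[OF assms(5)] by blast
  have "0 < S"
    using \<V>(4) ennreal_less_iff by (metis ennreal_eq_0_iff not_less not_less_zero)
  then have "0 \<le> T"
    using compression[of undefined undefined] by simp
  have "Delta_c (UNIV :: 'a set) R \<le> cover_diam (vimage_cover f \<V>)"
  proof (rule Delta_c_le_cover_diam)
    show "is_cover UNIV (vimage_cover f \<V>)"
      using \<V>(1) by (rule is_cover_vimage_cover)
    show "point_finite (vimage_cover f \<V>)"
      using \<V>(2) by (rule point_finite_vimage_cover)
    show "ennreal R \<le> lebesgue_num UNIV (vimage_cover f \<V>)"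
      using \<V>(3) assms(1-4) by (rule lebesgue_num_vimage_cover_ge)
  qed
  also have "\<dots> \<le> ennreal T"
    using \<V>(4) \<open>0 < S\<close> \<open>0 \<le> T\<close> compression
    by (intro cover_diam_vimage_cover_le[where S = S]) auto
  finally show ?thesis .
qed

lemma dist_le_omega_f: "dist x y \<le> t \<Longrightarrow> ennreal (dist (f x) (f y)) \<le> omega_f f t"
  unfolding omega_f_def by (rule SUP_upper2[where i = "(x, y)"]) auto

lemma rho_f_le_dist: "t \<le> dist x y \<Longrightarrow> rho_f f t \<le> ennreal (dist (f x) (f y))"
  unfolding rho_f_def by (rule INF_lower2[where i = "(x, y)"]) auto

lemma coarse_embedding_expansion_bound:
  assumes "coarse_embedding f"
  obtains w where "0 \<le> w" "\<And>x y. dist x y \<le> t \<Longrightarrow> dist (f x) (f y) \<le> w"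
proof -
  have "omega_f f t < \<infinity>"
    using assms by (simp add: coarse_embedding_def)
  then obtain w where "0 \<le> w" "omega_f f t = ennreal w"
    by (auto simp: less_top_ennreal)
  with dist_le_omega_f[of _ _ t f] show ?thesis
    by (intro that) (auto simp: ennreal_le_iff)
qed

lemma coarse_embedding_compression_bound:
  assumes "coarse_embedding f"
  obtains T where "\<And>x y. dist (f x) (f y) \<le> S \<Longrightarrow> dist x y \<le> T"
proof -
  have "(rho_f f \<longlongrightarrow> \<infinity>) at_top"
    using assms by (simp add: coarse_embedding_def)
  then have "eventually (\<lambda>t. ennreal S < rho_f f t) at_top"
    by (rule order_tendstoD) simp
  then obtain T where T: "\<And>t. T \<le> t \<Longrightarrow> ennreal S < rho_f f t"
    by (auto simp: eventually_at_top_linorder)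
  have "dist x y \<le> T" if "dist (f x) (f y) \<le> S" for x y
  proof (rule ccontr)
    assume "\<not> dist x y \<le> T"
    then have "ennreal S < rho_f f (dist x y)"
      by (intro T) simp
    also have "\<dots> \<le> ennreal (dist (f x) (f y))"
      by (rule rho_f_le_dist) simp
    finally show False
      using ennreal_leI[OF that] by simp
  qed
  then show ?thesis by (rule that)
qed

lemma dist_bounds_of_moduli_bounds:
  assumes "1 \<le> A" "0 \<le> B"
    and moduli: "\<And>t. 0 \<le> t \<Longrightarrow> omega_f f t \<le> ennreal (A * t + B) \<and> ennreal (t / A - B) \<le> rho_f f t"
  shows "dist (f x) (f y) \<le> A * dist x y + B"
    and "dist x y \<le> A * (dist (f x) (f y) + B)"
proof -
  have "ennreal (dist (f x) (f y)) \<le> omega_f f (dist x y)"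
    by (rule dist_le_omega_f) simp
  also have "\<dots> \<le> ennreal (A * dist x y + B)"
    using moduli by simp
  finally show "dist (f x) (f y) \<le> A * dist x y + B"
    using assms(1,2) by (subst (asm) ennreal_le_iff) auto
  have "ennreal (dist x y / A - B) \<le> rho_f f (dist x y)"
    using moduli by simp
  also have "\<dots> \<le> ennreal (dist (f x) (f y))"
    by (rule rho_f_le_dist) simp
  finally have "dist x y / A - B \<le> dist (f x) (f y)"
    by (auto simp: ennreal_le_iff2)
  then show "dist x y \<le> A * (dist (f x) (f y) + B)"
    using assms(1) by (simp add: field_simps)
qed

lemma coarse_lipschitz_embeddingE:
  assumes "coarse_lipschitz_embedding f"
  obtains A B where "1 \<le> A" "0 \<le> B"
    "\<And>x y. dist (f x) (f y) \<le> A * dist x y + B"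
    "\<And>x y. dist x y \<le> A * (dist (f x) (f y) + B)"
  using assms dist_bounds_of_moduli_bounds unfolding coarse_lipschitz_embedding_def by metis

lemma bi_lipschitz_embeddingE:
  assumes "bi_lipschitz_embedding f"
  obtains A where "1 \<le> A"
    "\<And>x y. dist (f x) (f y) \<le> A * dist x y"
    "\<And>x y. dist x y \<le> A * dist (f x) (f y)"
  using assms dist_bounds_of_moduli_bounds[where B = 0, OF _ order_refl] unfolding bi_lipschitz_embedding_def
  by (metis add.right_neutral diff_zero)

lemma Lip_le:
  assumes "0 \<le> K" "\<And>x y. dist (f x) (f y) \<le> K * dist x y"
  shows "Lip f \<le> ennreal K"
  unfolding Lip_def
proof (rule SUP_least, clarsimp)
  fix x y :: 'a assume "x \<noteq> y"
  then show "ennreal (dist (f x) (f y) / dist x y) \<le> ennreal K"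
    using assms(2)[of x y] by (intro ennreal_leI) (simp add: divide_le_eq mult.commute)
qed

lemma Lip_inv_le:
  assumes "0 \<le> K" "\<And>x y. dist x y \<le> K * dist (f x) (f y)"
  shows "Lip_inv f \<le> ennreal K"
  unfolding Lip_inv_def
proof (rule SUP_least, clarsimp)
  fix x y :: 'a
  show "ennreal (dist x y / dist (f x) (f y)) \<le> ennreal K"
    using assms by (cases "f x = f y") (auto intro!: ennreal_leI simp: divide_le_eq mult.commute)
qed

lemma dist_le_Lip:
  assumes "Lip f \<le> ennreal l" "0 \<le> l"
  shows "dist (f x) (f y) \<le> l * dist x y"
proof (cases "x = y")
  case False
  have "ennreal (dist (f x) (f y) / dist x y) \<le> Lip f"
    unfolding Lip_def by (rule SUP_upper2[where i = "(x, y)"]) (use False in auto)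
  with assms have "dist (f x) (f y) / dist x y \<le> l"
    using ennreal_le_iff order_trans by blast
  with False show ?thesis
    by (simp add: divide_le_eq mult.commute)
qed simp

text \<open>Injectivity is needed: pairs collapsed by \<open>f\<close> contribute \<open>dist x y / 0 = 0\<close> to \<open>Lip_inv f\<close>.\<close>

lemma dist_le_Lip_inv:
  assumes "Lip_inv f \<le> ennreal m" "0 \<le> m" "inj f"
  shows "dist x y \<le> m * dist (f x) (f y)"
proof (cases "x = y")
  case False
  with \<open>inj f\<close> have "f x \<noteq> f y"
    by (auto dest: injD)
  have "ennreal (dist x y / dist (f x) (f y)) \<le> Lip_inv f"
    unfolding Lip_inv_def by (rule SUP_upper2[where i = "(x, y)"]) (use False in auto)
  with assms have "dist x y / dist (f x) (f y) \<le> m"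
    using ennreal_le_iff order_trans by blast
  with \<open>f x \<noteq> f y\<close> show ?thesis
    by (simp add: divide_le_eq mult.commute)
qed simp

lemma bi_lipschitz_embedding_LipE:
  assumes "bi_lipschitz_embedding f"
  obtains l m where "0 \<le> l" "Lip f = ennreal l" "0 \<le> m" "Lip_inv f = ennreal m"
    "\<And>x y. dist (f x) (f y) \<le> l * dist x y"
    "\<And>x y. dist x y \<le> m * dist (f x) (f y)"
proof -
  obtain A where "1 \<le> A" "\<And>x y. dist (f x) (f y) \<le> A * dist x y"
    and lower: "\<And>x y. dist x y \<le> A * dist (f x) (f y)"
    using bi_lipschitz_embeddingE[OF assms] by blast
  then have "Lip f \<le> ennreal A" "Lip_inv f \<le> ennreal A"
    by (auto intro: Lip_le Lip_inv_le)
  then obtain l m where "0 \<le> l" "Lip f = ennreal l" "0 \<le> m" "Lip_inv f = ennreal m"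
    by (metis ennreal_less_top le_less_trans less_top_ennreal)
  moreover have "inj f"
    using lower by (intro injI) (metis dist_eq_0_iff mult_zero_right order_antisym zero_le_dist)
  ultimately show ?thesis
    by (intro that) (auto intro: dist_le_Lip dist_le_Lip_inv)
qed

lemma coarse_stone_if_coarse_embedding:
  fixes f :: "'a::metric_space \<Rightarrow> 'b::metric_space"
  assumes "coarse_stone (UNIV :: 'b set)" "coarse_embedding f"
  shows "coarse_stone (UNIV :: 'a set)"
  unfolding coarse_stone_def
proof (intro allI impI)
  fix R :: real
  assume "0 \<le> R"
  obtain w where "0 \<le> w" and expansion: "\<And>x y. dist x y \<le> R \<Longrightarrow> dist (f x) (f y) \<le> w"
    using coarse_embedding_expansion_bound[OF assms(2), of R] by blast
  have "Delta_c (UNIV :: 'b set) (w + 1) < \<infinity>"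
    using assms(1) \<open>0 \<le> w\<close> by (simp add: coarse_stone_def)
  then obtain n :: nat where Delta: "Delta_c (UNIV :: 'b set) (w + 1) < ennreal n"
    using ennreal_Ex_less_of_nat by (auto simp: ennreal_of_nat_eq_real_of_nat)
  obtain T where compression: "\<And>x y. dist (f x) (f y) \<le> n \<Longrightarrow> dist x y \<le> T"
    using coarse_embedding_compression_bound[OF assms(2), of n] by blast
  have "Delta_c (UNIV :: 'a set) R \<le> ennreal T"
  proof (rule Delta_c_UNIV_le_by_pullback[OF \<open>0 \<le> R\<close> \<open>0 \<le> w\<close> _ _ Delta compression])
    show "w < w + 1" by simp
    show "dist (f x) (f y) \<le> w" if "dist x y < R" for x y
      using expansion that by simp
  qed
  then show "Delta_c (UNIV :: 'a set) R < \<infinity>"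
    by (simp add: le_less_trans)
qed

lemma Delta_c_affine_bound_if_coarse_lipschitz_embedding:
  fixes f :: "'a::metric_space \<Rightarrow> 'b::metric_space"
  assumes "coarse_lipschitz_embedding f" "0 \<le> C" "0 \<le> D"
    and Delta_Y: "\<forall>R\<ge>0. Delta_c (UNIV :: 'b set) R \<le> ennreal (C * R + D)"
  shows "\<exists>C' D'. 0 \<le> C' \<and> 0 \<le> D' \<and> (\<forall>R\<ge>0. Delta_c (UNIV :: 'a set) R < ennreal (C' * R + D'))"
proof -
  obtain A B where AB: "1 \<le> A" "0 \<le> B"
    and upper: "\<And>x y. dist (f x) (f y) \<le> A * dist x y + B"
    and lower: "\<And>x y. dist x y \<le> A * (dist (f x) (f y) + B)"
    using coarse_lipschitz_embeddingE[OF assms(1)] by blast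
  have "Delta_c (UNIV :: 'a set) R < ennreal (A * C * A * R + (A * (C * (B + 1) + D + 1 + B) + 1))"
    if "0 \<le> R" for R
  proof -
    define w where "w = A * R + B"
    define S where "S = C * (w + 1) + D + 1"
    have "0 \<le> w"
      using AB \<open>0 \<le> R\<close> by (simp add: w_def)
    then have "0 < S"
      using assms(2,3) by (simp add: S_def add_nonneg_pos)
    have "Delta_c (UNIV :: 'b set) (w + 1) \<le> ennreal (C * (w + 1) + D)"
      using Delta_Y \<open>0 \<le> w\<close> by simp
    also have "\<dots> < ennreal S"
      using \<open>0 < S\<close> by (intro ennreal_lessI) (auto simp: S_def)
    finally have Delta: "Delta_c (UNIV :: 'b set) (w + 1) < ennreal S" .
    have "Delta_c (UNIV :: 'a set) R \<le> ennreal (A * (S + B))"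
    proof (rule Delta_c_UNIV_le_by_pullback[OF \<open>0 \<le> R\<close> \<open>0 \<le> w\<close> _ _ Delta])
      show "w < w + 1" by simp
      show "dist (f x) (f y) \<le> w" if "dist x y < R" for x y
      proof -
        have "A * dist x y \<le> A * R"
          using AB that by (intro mult_left_mono) auto
        then show ?thesis
          using upper[of x y] by (simp add: w_def)
      qed
      show "dist x y \<le> A * (S + B)" if "dist (f x) (f y) \<le> S" for x y
        using lower[of x y] AB that by (meson add_right_mono mult_left_mono order_trans zero_le_one)
    qed
    also have "\<dots> < ennreal (A * (S + B) + 1)"
      using AB \<open>0 < S\<close> by (intro ennreal_lessI) (auto simp: add_nonneg_pos)
    also have "A * (S + B) + 1 = A * C * A * R + (A * (C * (B + 1) + D + 1 + B) + 1)"
      by (simp add: S_def w_def algebra_simps)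
    finally show ?thesis .
  qed
  moreover have "0 \<le> A * C * A" "0 \<le> A * (C * (B + 1) + D + 1 + B) + 1"
    using AB assms(2,3) by auto
  ultimately show ?thesis by blast
qed

lemma Delta_c_le_distortion_if_bi_lipschitz_embedding:
  fixes f :: "'a::metric_space \<Rightarrow> 'b::metric_space"
  assumes "bi_lipschitz_embedding f" "0 \<le> C" "0 \<le> R"
    and Delta_Y: "\<forall>R\<ge>0. Delta_c (UNIV :: 'b set) R \<le> ennreal (C * R)"
  shows "Delta_c (UNIV :: 'a set) R \<le> ennreal C * distortion f * ennreal R"
proof -
  obtain l m where "0 \<le> l" "Lip f = ennreal l" "0 \<le> m" "Lip_inv f = ennreal m"
    and Lip_bound: "\<And>x y. dist (f x) (f y) \<le> l * dist x y"
    and Lip_inv_bound: "\<And>x y. dist x y \<le> m * dist (f x) (f y)"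
    using bi_lipschitz_embedding_LipE[OF assms(1)] by blast
  have approx: "Delta_c (UNIV :: 'a set) R \<le> ennreal (m * C * l * R) + ennreal e" if "0 < e" for e
  proof -
    \<comment> \<open>the slack \<open>\<delta>\<close> enters the bound multiplied by \<open>m * (C + 1)\<close>\<close>
    define \<delta> where "\<delta> = e / (m * (C + 1) + 1)"
    define S where "S = C * (l * R + \<delta>) + \<delta>"
    have "0 < \<delta>"
      using \<open>0 < e\<close> \<open>0 \<le> m\<close> assms(2) by (simp add: \<delta>_def add_nonneg_pos)
    have "0 \<le> l * R"
      using \<open>0 \<le> l\<close> assms(3) by simp
    have "Delta_c (UNIV :: 'b set) (l * R + \<delta>) \<le> ennreal (C * (l * R + \<delta>))"
      using Delta_Y \<open>0 \<le> l * R\<close> \<open>0 < \<delta>\<close> by simp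
    also have "\<dots> < ennreal S"
      using assms(2) \<open>0 \<le> l * R\<close> \<open>0 < \<delta>\<close> by (intro ennreal_lessI) (auto simp: S_def intro!: add_nonneg_pos)
    finally have Delta: "Delta_c (UNIV :: 'b set) (l * R + \<delta>) < ennreal S" .
    have "Delta_c (UNIV :: 'a set) R \<le> ennreal (m * S)"
    proof (rule Delta_c_UNIV_le_by_pullback[OF assms(3) \<open>0 \<le> l * R\<close> _ _ Delta])
      show "l * R < l * R + \<delta>"
        using \<open>0 < \<delta>\<close> by simp
      show "dist (f x) (f y) \<le> l * R" if "dist x y < R" for x y
        using Lip_bound[of x y] \<open>0 \<le> l\<close> that by (meson less_imp_le mult_left_mono order_trans)
      show "dist x y \<le> m * S" if "dist (f x) (f y) \<le> S" for x y
        using Lip_inv_bound[of x y] \<open>0 \<le> m\<close> that by (meson mult_left_mono order_trans)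
    qed
    also have "\<dots> \<le> ennreal (m * C * l * R + e)"
    proof (rule ennreal_leI)
      have "0 \<le> m * (C + 1)"
        using \<open>0 \<le> m\<close> assms(2) by simp
      then have "m * (C + 1) * \<delta> \<le> e"
        using \<open>0 < e\<close> unfolding \<delta>_def by (simp add: field_simps)
      then show "m * S \<le> m * C * l * R + e"
        by (simp add: S_def algebra_simps)
    qed
    finally show ?thesis
      using \<open>0 \<le> m\<close> \<open>0 \<le> l\<close> assms(2,3) \<open>0 < e\<close> by (simp add: ennreal_plus)
  qed
  then have "Delta_c (UNIV :: 'a set) R \<le> ennreal (m * C * l * R)"
    using approx by (blast intro: ennreal_le_epsilon)
  also have "\<dots> = ennreal C * (ennreal l * ennreal m) * ennreal R"
    using \<open>0 \<le> m\<close> \<open>0 \<le> l\<close> assms(2,3) by (simp add: ennreal_mult' mult_ac)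
  also have "\<dots> = ennreal C * distortion f * ennreal R"
    using \<open>Lip f = ennreal l\<close> \<open>Lip_inv f = ennreal m\<close> by (simp add: distortion_def)
  finally show ?thesis .
qed

theorem proposition3p9:
  fixes f :: "'a::metric_space \<Rightarrow> 'b::metric_space"
  shows "(coarse_stone (UNIV :: 'b set) \<and> coarse_embedding f
            \<longrightarrow> coarse_stone (UNIV :: 'a set))
       \<and> (coarse_lipschitz_embedding f \<and>
          (\<exists>C D. C \<ge> 0 \<and> D \<ge> 0 \<and> (\<forall>R\<ge>0. Delta_c (UNIV :: 'b set) R \<le> ennreal (C * R + D)))
            \<longrightarrow> (\<exists>C' D'. C' \<ge> 0 \<and> D' \<ge> 0 \<and>
                   (\<forall>R\<ge>0. Delta_c (UNIV :: 'a set) R < ennreal (C' * R + D'))))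
       \<and> (\<forall>C. C \<ge> 0 \<and> bi_lipschitz_embedding f \<and>
               (\<forall>R\<ge>0. Delta_c (UNIV :: 'b set) R \<le> ennreal (C * R))
            \<longrightarrow> (\<forall>R\<ge>0. Delta_c (UNIV :: 'a set) R \<le> ennreal C * distortion f * ennreal R))"
  using coarse_stone_if_coarse_embedding[of f]
    Delta_c_affine_bound_if_coarse_lipschitz_embedding[of f]
    Delta_c_le_distortion_if_bi_lipschitz_embedding[of f]
  by blast

end
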